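(* In the category of topological spaces, let $\{b\}\to\{a\searrow b\}$ be the inclusion of the closed point $b$ into the Sierpiński space. Then: (1) $\{\{b\}\to\{a\searrow b\}\}^l$ is exactly the class of continuous maps $f:A\to B$ with dense image $f(A)\subseteq B$; (2) $\{\{b\}\to\{a\searrow b\}\}^{lr}$ is exactly the class of closed embeddings, i.e. continuous maps $g:A\to X$ which are homeomorphisms onto a closed subset of $X$ equipped with the induced topology.
   Context: For morphisms $f:A\to B$ and $g:X\to Y$ in a category, write $f\rightthreetimes g$ ("$f$ has the left lifting property with respect to $g$") if for all morphisms $i:A\to X$, $j:B\to Y$ with $g\circ i=j\circ f$ there exists a morphism $h:B\to X$ with $h\circ f=i$ and $g\circ h=j$. For a class $C$ of morphisms, $C^l=\{f:\ f\rightthreetimes g\text{ for all }g\in C\}$ and $C^r=\{g:\ f\rightthreetimes g\text{ for all }f\in C\}$; $C^{lr}=(C^l)^r$. $\{a\searrow b\}$ denotes the Sierpiński space on points $a,b$ with open sets $\emptyset,\{a\},\{a,b\}$ (so $a$ is open, $b$ is closed and $b\in\overline{\{a\}}$). *)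

theory Defs
  imports "HOL-Analysis.Analysis"
begin

text \<open>Morphisms of Top are continuous maps; two maps are equal as morphisms iff
they agree on the topological space of the domain.\<close>

definition llp ::
  "'a topology \<Rightarrow> 'b topology \<Rightarrow> ('a \<Rightarrow> 'b) \<Rightarrow>
   'c topology \<Rightarrow> 'd topology \<Rightarrow> ('c \<Rightarrow> 'd) \<Rightarrow> bool" where
  "llp A B f X Y g \<longleftrightarrow>
     (\<forall>i j. continuous_map A X i \<and> continuous_map B Y j \<and>
            (\<forall>x\<in>topspace A. g (i x) = j (f x)) \<longrightarrow>
        (\<exists>h. continuous_map B X h \<and> (\<forall>x\<in>topspace A. h (f x) = i x) \<and>
             (\<forall>y\<in>topspace B. g (h y) = j y)))"

text \<open>Sierpinski space on bool: a = True (open point), b = False (closed point).\<close>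

definition sierpinski :: "bool topology" where
  "sierpinski = topology (\<lambda>U. U = {} \<or> U = {True} \<or> U = UNIV)"

definition closed_pt :: "bool topology" where
  "closed_pt = subtopology sierpinski {False}"

definition in_Cl :: "'a topology \<Rightarrow> 'b topology \<Rightarrow> ('a \<Rightarrow> 'b) \<Rightarrow> bool" where
  "in_Cl A B f \<longleftrightarrow> continuous_map A B f \<and> llp A B f closed_pt sierpinski id"

definition closed_embedding :: "'a topology \<Rightarrow> 'b topology \<Rightarrow> ('a \<Rightarrow> 'b) \<Rightarrow> bool" where
  "closed_embedding X Y g \<longleftrightarrow> embedding_map X Y g \<and> closedin Y (g ` topspace X)"

end

theory Submission
  imports Defs
begin

text \<open>A commutative square with \<open>f : A \<rightarrow> B\<close> on the left and \<open>{b} \<rightarrow> {a \<searrow> b}\<close> on the right is the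
same as an open set \<open>U \<subseteq> B\<close> missing \<open>f(A)\<close>, and it has a lift exactly when \<open>U = {}\<close>; so the left class
consists of the maps with dense image. Dense maps lift against closed embeddings because a
continuous map into \<open>Y\<close> sending a dense set into a closed subset \<open>g(X)\<close> lands in \<open>g(X)\<close>, where
\<open>g\<close> can be inverted. Conversely, if \<open>g\<close> lifts against the dense map \<open>g : X \<rightarrow> cl g(X)\<close>, the lift of
the square formed by the identity of \<open>X\<close> and the inclusion of \<open>cl g(X)\<close> into \<open>Y\<close> is an inverse
of \<open>g\<close> on \<open>cl g(X)\<close>, so \<open>g(X)\<close> is closed and \<open>g\<close> is an embedding.\<close>

lemma openin_sierpinski: "openin sierpinski U \<longleftrightarrow> U = {} \<or> U = {True} \<or> U = UNIV"
proof -
  have "istopology (\<lambda>U. U = {} \<or> U = {True} \<or> U = (UNIV::bool set))"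
    unfolding istopology_def
  proof (intro conjI allI impI)
    fix K :: "bool set set"
    assume K: "\<forall>S\<in>K. S = {} \<or> S = {True} \<or> S = UNIV"
    show "\<Union>K = {} \<or> \<Union>K = {True} \<or> \<Union>K = UNIV"
    proof (cases "UNIV \<in> K")
      case False
      then have "\<Union>K \<subseteq> {True}" using K by auto
      then show ?thesis by auto
    qed auto
  qed auto
  then show ?thesis unfolding sierpinski_def by simp
qed

lemma topspace_sierpinski [simp]: "topspace sierpinski = UNIV"
  unfolding topspace_def using openin_sierpinski by auto

lemma topspace_closed_pt [simp]: "topspace closed_pt = {False}"
  unfolding closed_pt_def by simp

lemma continuous_map_sierpinski_iff:
  "continuous_map B sierpinski j \<longleftrightarrow> openin B {y \<in> topspace B. j y}"
proof
  assume "continuous_map B sierpinski j"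
  then have "openin B {y \<in> topspace B. j y \<in> {True}}"
    by (simp add: continuous_map_def openin_sierpinski)
  then show "openin B {y \<in> topspace B. j y}" by simp
next
  assume "openin B {y \<in> topspace B. j y}"
  then show "continuous_map B sierpinski j"
    by (auto simp: continuous_map_def openin_sierpinski)
qed

lemma continuous_map_closed_pt_iff:
  "continuous_map B closed_pt h \<longleftrightarrow> (\<forall>y\<in>topspace B. \<not> h y)"
proof
  assume "continuous_map B closed_pt h"
  then show "\<forall>y\<in>topspace B. \<not> h y"
    using continuous_map_image_subset_topspace[of B closed_pt h] by auto
next
  assume "\<forall>y\<in>topspace B. \<not> h y"
  then show "continuous_map B closed_pt h"
    using continuous_map_eq[of B closed_pt "\<lambda>_. False" h] by simp
qed

lemma llp_closed_pt_sierpinski_iff: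
  "llp A B f closed_pt sierpinski id \<longleftrightarrow>
     (\<forall>U. openin B U \<and> U \<noteq> {} \<longrightarrow> f ` topspace A \<inter> U \<noteq> {})"
proof
  assume lifts: "llp A B f closed_pt sierpinski id"
  show "\<forall>U. openin B U \<and> U \<noteq> {} \<longrightarrow> f ` topspace A \<inter> U \<noteq> {}"
  proof (intro allI impI notI)
    fix U
    assume U: "openin B U \<and> U \<noteq> {}" and disjoint: "f ` topspace A \<inter> U = {}"
    then have "{y \<in> topspace B. y \<in> U} = U" using openin_subset by blast
    then have "continuous_map B sierpinski (\<lambda>y. y \<in> U)"
      using U by (simp add: continuous_map_sierpinski_iff)
    moreover have "\<forall>x\<in>topspace A. id False = (f x \<in> U)" using disjoint by auto
    ultimately obtain h where "continuous_map B closed_pt h" "\<forall>y\<in>topspace B. id (h y) = (y \<in> U)"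
      using lifts[unfolded llp_def, rule_format, of "\<lambda>_. False" "\<lambda>y. y \<in> U"] by auto
    moreover obtain y where "y \<in> U" using U by blast
    ultimately show False
      using U openin_subset unfolding continuous_map_closed_pt_iff by (metis id_apply subsetD)
  qed
next
  assume dense: "\<forall>U. openin B U \<and> U \<noteq> {} \<longrightarrow> f ` topspace A \<inter> U \<noteq> {}"
  show "llp A B f closed_pt sierpinski id"
    unfolding llp_def
  proof (intro allI impI)
    fix i j
    assume square: "continuous_map A closed_pt i \<and> continuous_map B sierpinski j \<and>
                    (\<forall>x\<in>topspace A. id (i x) = j (f x))"
    then have "f ` topspace A \<inter> {y \<in> topspace B. j y} = {}"
      by (auto simp: continuous_map_closed_pt_iff)
    then have "\<forall>y\<in>topspace B. \<not> j y"
      using dense square by (auto simp: continuous_map_sierpinski_iff)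
    then show "\<exists>h. continuous_map B closed_pt h \<and> (\<forall>x\<in>topspace A. h (f x) = i x) \<and>
                   (\<forall>y\<in>topspace B. id (h y) = j y)"
      using square by (intro exI[of _ j]) (auto simp: continuous_map_closed_pt_iff)
  qed
qed

lemma in_Cl_iff_dense:
  "continuous_map A B f \<Longrightarrow> in_Cl A B f \<longleftrightarrow> B closure_of (f ` topspace A) = topspace B"
  by (simp add: in_Cl_def llp_closed_pt_sierpinski_iff dense_intersects_open)

lemma llp_dense_closed_embedding:
  assumes dense: "B closure_of (f ` topspace A) = topspace B"
    and ce: "closed_embedding X Y g"
  shows "llp A B f X Y g"
  unfolding llp_def
proof (intro allI impI)
  fix i j
  assume "continuous_map A X i \<and> continuous_map B Y j \<and> (\<forall>x\<in>topspace A. g (i x) = j (f x))"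
  then have ci: "continuous_map A X i" and cj: "continuous_map B Y j"
    and comm: "\<forall>x\<in>topspace A. g (i x) = j (f x)" by auto
  obtain g' where g': "homeomorphic_maps X (subtopology Y (g ` topspace X)) g g'"
    using ce unfolding closed_embedding_def embedding_map_def homeomorphic_map_maps by blast
  have gY: "g ` topspace X \<subseteq> topspace Y"
    using g' continuous_map_image_subset_topspace by (fastforce simp: homeomorphic_maps_def)
  have g'g: "\<forall>x\<in>topspace X. g' (g x) = x" and gg': "\<forall>y\<in>g ` topspace X. g (g' y) = y"
    using g' gY by (auto simp: homeomorphic_maps_def Int_absorb1)
  have "j ` f ` topspace A \<subseteq> g ` topspace X"
    using comm continuous_map_image_subset_topspace[OF ci] by force
  then have "Y closure_of (j ` f ` topspace A) \<subseteq> g ` topspace X"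
    using ce by (simp add: closure_of_minimal closed_embedding_def)
  then have jB: "j ` topspace B \<subseteq> g ` topspace X"
    using continuous_map_image_closure_subset[OF cj, of "f ` topspace A"] dense by blast
  then have "continuous_map B (subtopology Y (g ` topspace X)) j"
    using cj by (simp add: continuous_map_in_subtopology image_subset_iff_funcset)
  then have "continuous_map B X (g' \<circ> j)"
    using g' continuous_map_compose homeomorphic_maps_def by blast
  moreover have "\<forall>x\<in>topspace A. g' (j (f x)) = i x"
    using comm g'g continuous_map_image_subset_topspace[OF ci] by (metis image_subset_iff)
  moreover have "\<forall>y\<in>topspace B. g (g' (j y)) = j y"
    using jB gg' by blast
  ultimately show "\<exists>h. continuous_map B X h \<and> (\<forall>x\<in>topspace A. h (f x) = i x) \<and>
                       (\<forall>y\<in>topspace B. g (h y) = j y)"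
    by (intro exI[of _ "g' \<circ> j"]) simp
qed

lemma dense_in_subtopology_closure_of:
  assumes "S \<subseteq> topspace Y"
  shows "subtopology Y (Y closure_of S) closure_of S = topspace (subtopology Y (Y closure_of S))"
  using assms closure_of_subset[OF assms] closure_of_subset_topspace[of Y S]
  by (simp add: closure_of_subtopology Int_absorb1 Int_absorb2)

lemma closed_embedding_if_llp_corestriction:
  assumes cg: "continuous_map X Y g"
    and lifts: "llp X (subtopology Y (Y closure_of (g ` topspace X))) g X Y g"
  shows "closed_embedding X Y g"
proof -
  define S where "S = Y closure_of (g ` topspace X)"
  have gS: "g ` topspace X \<subseteq> S"
    unfolding S_def using closure_of_subset continuous_map_image_subset_topspace[OF cg] by blast
  have tS: "topspace (subtopology Y S) = S"
    by (simp add: S_def closure_of_subset_topspace inf.absorb2)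
  have "continuous_map (subtopology Y S) Y id"
    by (simp add: continuous_map_from_subtopology)
  then have "\<exists>h. continuous_map (subtopology Y S) X h \<and> (\<forall>x\<in>topspace X. h (g x) = id x) \<and>
               (\<forall>y\<in>topspace (subtopology Y S). g (h y) = id y)"
    using lifts continuous_map_id[of X] unfolding llp_def S_def[symmetric] by simp
  then obtain h where ch: "continuous_map (subtopology Y S) X h"
    and hg: "\<forall>x\<in>topspace X. h (g x) = x" and gh: "\<forall>y\<in>S. g (h y) = y"
    using tS by auto
  have "S \<subseteq> g ` topspace X"
    using gh continuous_map_image_subset_topspace[OF ch] tS by (metis image_subset_iff image_eqI subsetI)
  then have image: "g ` topspace X = S"
    using gS by blast
  have "continuous_map X (subtopology Y S) g"
    using cg gS by (simp add: continuous_map_in_subtopology image_subset_iff_funcset)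
  then have "homeomorphic_maps X (subtopology Y S) g h"
    unfolding homeomorphic_maps_def tS using ch hg gh by (intro conjI)
  then have "embedding_map X Y g"
    unfolding embedding_map_def homeomorphic_map_maps image by blast
  moreover have "closedin Y S"
    unfolding S_def by (rule closedin_closure_of)
  ultimately show ?thesis
    by (simp add: closed_embedding_def image)
qed

theorem claim2:
  fixes A :: "'a topology" and B :: "'b topology" and f :: "'a \<Rightarrow> 'b"
    and X :: "'c topology" and Y :: "'d topology" and g :: "'c \<Rightarrow> 'd"
  shows "(continuous_map A B f \<longrightarrow>
           (in_Cl A B f \<longleftrightarrow> B closure_of (f ` topspace A) = topspace B))
       \<and> (continuous_map X Y g \<longrightarrow>
           (closed_embedding X Y g \<longrightarrow> (\<forall>(A'::'a topology) (B'::'b topology) f'.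
               in_Cl A' B' f' \<longrightarrow> llp A' B' f' X Y g))
         \<and> ((\<forall>(A'::'c topology) (B'::'d topology) f'.
               in_Cl A' B' f' \<longrightarrow> llp A' B' f' X Y g) \<longrightarrow> closed_embedding X Y g))"
proof (intro conjI impI allI)
  assume "continuous_map A B f"
  then show "in_Cl A B f \<longleftrightarrow> B closure_of (f ` topspace A) = topspace B"
    by (rule in_Cl_iff_dense)
next
  fix A' :: "'a topology" and B' :: "'b topology" and f'
  assume "closed_embedding X Y g" "in_Cl A' B' f'"
  then show "llp A' B' f' X Y g"
    by (meson in_Cl_def in_Cl_iff_dense llp_dense_closed_embedding)
next
  assume cg: "continuous_map X Y g"
    and lifts: "\<forall>(A'::'c topology) (B'::'d topology) f'. in_Cl A' B' f' \<longrightarrow> llp A' B' f' X Y g"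
  let ?B = "subtopology Y (Y closure_of (g ` topspace X))"
  have "continuous_map X ?B g"
    using cg closure_of_subset continuous_map_image_subset_topspace[OF cg]
    by (auto simp: continuous_map_in_subtopology)
  then have "in_Cl X ?B g"
    using dense_in_subtopology_closure_of continuous_map_image_subset_topspace[OF cg]
    by (simp add: in_Cl_iff_dense)
  then show "closed_embedding X Y g"
    using cg lifts closed_embedding_if_llp_corestriction by blast
qed

end
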